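(* Let $q$ be a prime power, $r\mid(q-1)$ with $r\ge3$, $q/2\le \ell\le q-1$, and $s\mid (q-1)/r$. The folded quantum Tamo–Barg code with parameters $q,r,\ell,s$ is a quantum locally recoverable code with locality $r$.
   Context: $[n]=\{0,\dots,n-1\}$, $\mathbb{F}_q^*=\mathbb{F}_q\setminus\{0\}$. For $S\subseteq\mathbb{Z}_{\ge0}$, $\mathbb{F}_q[X]^S=\{\sum_{i\in S}a_iX^i\}$, $\mathrm{ev}(f)=(f(x))_{x\in\mathbb{F}_q^*}$. Let $S=\{i\in[\ell]:i\not\equiv r-1\pmod r\}\cup\{i\in[q-1]:i\equiv1\pmod r\}$, $C=\mathrm{ev}(\mathbb{F}_q[X]^S)$; for $\ell\ge q/2$, $C^\perp\subseteq C$ and the quantum Tamo–Barg code is $\mathrm{CSS}(C,C)=\mathrm{span}\{\sum_{y\in C^\perp}|x+y\rangle:x\in C\}\subseteq(\mathbb{C}^q)^{\otimes(q-1)}$, qudits indexed by $\mathbb{F}_q^*$. Folding: fix a generator $\omega$ of $\mathbb{F}_q^*$ and for $i\in[(q-1)/s]$ group the $s$ qudits at positions $\{\omega^{si},\omega^{si+1},\dots,\omega^{si+s-1}\}$ into a single qudit of local dimension $q^s$; the resulting code of block length $(q-1)/s$ is the folded quantum Tamo–Barg code. A quantum code on qudit set $Q$ is locally recoverable with locality $r$ if for each $i\in Q$ there is $I_i\subseteq Q$ with $i\in I_i$, $|I_i|\le r$, and a quantum channel $\mathrm{Rec}_i$ from qudits $I_i\setminus\{i\}$ to qudits $I_i$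 with $(\mathrm{Rec}_i\otimes\mathrm{id})(\psi_{Q\setminus\{i\}})=\psi$ for every code state $\psi$. *)

theory Defs
  imports Complex_Main "HOL-Computational_Algebra.Polynomial" "HOL-Library.Cardinality"
begin

text \<open>Positions (physical qudits before folding) have type 'p, the local alphabet is 'a.
  A basis configuration on a position set P is a function 'p => 'a that is 0 outside P.
  Vectors are functions from configurations to complex numbers, operators are
  complex matrices indexed by pairs of configurations.\<close>

definition cfgs :: "'p set \<Rightarrow> ('p \<Rightarrow> 'a::zero) set" where
  "cfgs P = {f. \<forall>p. p \<notin> P \<longrightarrow> f p = 0}"

definition glue :: "'p set \<Rightarrow> ('p \<Rightarrow> 'a) \<Rightarrow> ('p \<Rightarrow> 'a) \<Rightarrow> 'p \<Rightarrow> 'a" where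
  "glue A x z = (\<lambda>p. if p \<in> A then x p else z p)"

definition restr :: "'p set \<Rightarrow> ('p \<Rightarrow> 'a::zero) \<Rightarrow> 'p \<Rightarrow> 'a" where
  "restr A x = (\<lambda>p. if p \<in> A then x p else 0)"

type_synonym ('p, 'a) qop = "('p \<Rightarrow> 'a) \<Rightarrow> ('p \<Rightarrow> 'a) \<Rightarrow> complex"

definition ptrace :: "'p set \<Rightarrow> 'p set \<Rightarrow> ('p, 'a::zero) qop \<Rightarrow> ('p, 'a) qop" where
  "ptrace P T \<rho> = (\<lambda>x y. \<Sum>z\<in>cfgs T. \<rho> (glue (P - T) x z) (glue (P - T) y z))"

text \<open>A quantum channel from the qudits A to the qudits B, in Kraus form
  (Kraus operators K k, k < n, with K k b a a matrix from configs on A to configs on B,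
  satisfying the trace-preservation condition sum_k K_k^dagger K_k = I).\<close>
definition is_channel :: "'p set \<Rightarrow> 'p set \<Rightarrow> nat \<Rightarrow> (nat \<Rightarrow> ('p, 'a::zero) qop) \<Rightarrow> bool" where
  "is_channel A B n K \<longleftrightarrow>
     (\<forall>a\<in>cfgs A. \<forall>a'\<in>cfgs A.
        (\<Sum>k<n. \<Sum>b\<in>cfgs B. cnj (K k b a) * K k b a') = (if a = a' then 1 else 0))"

text \<open>Apply (channel A -> B) tensor identity on the environment qudits E to an operator
  on A \<union> E; the result is an operator on B \<union> E.\<close>
definition apply_channel ::
  "'p set \<Rightarrow> 'p set \<Rightarrow> 'p set \<Rightarrow> nat \<Rightarrow> (nat \<Rightarrow> ('p, 'a::zero) qop) \<Rightarrow> ('p, 'a) qop \<Rightarrow> ('p, 'a) qop" where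
  "apply_channel A B E n K \<sigma> = (\<lambda>x y.
     \<Sum>k<n. \<Sum>a\<in>cfgs A. \<Sum>a'\<in>cfgs A.
        K k (restr B x) a * \<sigma> (glue A a (restr E x)) (glue A a' (restr E y)) * cnj (K k (restr B y) a'))"

text \<open>Code states of a code space V on positions P: density operators supported on V,
  i.e. convex combinations of projectors onto unit vectors of V.\<close>
definition code_state :: "'p set \<Rightarrow> (('p \<Rightarrow> 'a::zero) \<Rightarrow> complex) set \<Rightarrow> ('p, 'a) qop \<Rightarrow> bool" where
  "code_state P V \<rho> \<longleftrightarrow>
     (\<exists>n (pr :: nat \<Rightarrow> real) \<psi>.
        (\<forall>k<n. pr k \<ge> 0 \<and> \<psi> k \<in> V \<and> (\<Sum>x\<in>cfgs P. (cmod (\<psi> k x))\<^sup>2) = 1) \<and>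
        (\<Sum>k<n. pr k) = 1 \<and>
        (\<forall>x\<in>cfgs P. \<forall>y\<in>cfgs P. \<rho> x y = (\<Sum>k<n. complex_of_real (pr k) * \<psi> k x * cnj (\<psi> k y))))"

text \<open>The (possibly folded) qudits are
  indexed by Qd; qudit i consists of the physical positions blk i (the blocks partition P),
  so a qudit of local dimension |a|^|blk i| is the tensor product of these positions.\<close>
definition qLRC :: "'p set \<Rightarrow> 'i set \<Rightarrow> ('i \<Rightarrow> 'p set) \<Rightarrow> (('p \<Rightarrow> 'a::zero) \<Rightarrow> complex) set \<Rightarrow> nat \<Rightarrow> bool" where
  "qLRC P Qd blk V r \<longleftrightarrow>
     (\<forall>i\<in>Qd. \<exists>I. i \<in> I \<and> I \<subseteq> Qd \<and> finite I \<and> card I \<le> r \<and>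
        (\<exists>n K. is_channel (\<Union>(blk ` (I - {i}))) (\<Union>(blk ` I)) n K \<and>
          (\<forall>\<rho>. code_state P V \<rho> \<longrightarrow>
             (\<forall>x\<in>cfgs P. \<forall>y\<in>cfgs P.
                apply_channel (\<Union>(blk ` (I - {i}))) (\<Union>(blk ` I)) (P - \<Union>(blk ` I)) n K
                   (ptrace P (blk i) \<rho>) x y = \<rho> x y))))"

definition TB_S :: "nat \<Rightarrow> nat \<Rightarrow> nat \<Rightarrow> nat set" where
  "TB_S q r l = {i. i < l \<and> i mod r \<noteq> r - 1} \<union> {i. i < q - 1 \<and> i mod r = 1}"

text \<open>Evaluation vector (f(x))_{x in F_q^*}, as a word on positions F_q^* (0 at position 0).\<close>
definition ev :: "'a::field poly \<Rightarrow> 'a \<Rightarrow> 'a" where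
  "ev f = (\<lambda>x. if x = 0 then 0 else poly f x)"

definition TB_code :: "nat \<Rightarrow> nat \<Rightarrow> ('a::{finite,field} \<Rightarrow> 'a) set" where
  "TB_code r l = {ev f | f. \<forall>i. i \<notin> TB_S (card (UNIV :: 'a set)) r l \<longrightarrow> coeff f i = 0}"

definition dual_code :: "('a::{finite,field} \<Rightarrow> 'a) set \<Rightarrow> ('a \<Rightarrow> 'a) set" where
  "dual_code C = {y \<in> cfgs (- {0}). \<forall>c\<in>C. (\<Sum>x\<in>- {0}. c x * y x) = 0}"

text \<open>CSS(C1, C2) = span { sum_{y in C2^perp} |x + y> : x in C1 } on positions P.\<close>
definition coset_ket :: "'p set \<Rightarrow> ('p \<Rightarrow> 'a::{zero,plus}) set \<Rightarrow> ('p \<Rightarrow> 'a) \<Rightarrow> ('p \<Rightarrow> 'a) \<Rightarrow> complex" where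
  "coset_ket P D x = (\<lambda>z. if z \<in> cfgs P \<and> (\<exists>y\<in>D. z = (\<lambda>p. x p + y p)) then 1 else 0)"

definition CSS_space :: "'p set \<Rightarrow> ('p \<Rightarrow> 'a::{zero,plus}) set \<Rightarrow> ('p \<Rightarrow> 'a) set \<Rightarrow> (('p \<Rightarrow> 'a) \<Rightarrow> complex) set" where
  "CSS_space P C D = {(\<lambda>z. \<Sum>x\<in>C. c x * coset_ket P D x z) | c. True}"

definition qTB_space :: "nat \<Rightarrow> nat \<Rightarrow> (('a::{finite,field} \<Rightarrow> 'a) \<Rightarrow> complex) set" where
  "qTB_space r l = CSS_space (- {0}) (TB_code r l) (dual_code (TB_code r l))"

definition fold_blk :: "nat \<Rightarrow> 'a::field \<Rightarrow> nat \<Rightarrow> 'a set" where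
  "fold_blk s \<omega> i = {\<omega> ^ (s * i + t) | t. t < s}"

end

(*
  Let q - 1 = r s M.  Folded qudit i consists of the positions w^(s i + t), t < s; its r-th powers
  are pairwise distinct, and the r-th roots of these powers are exactly the positions of the r
  folded qudits j < r M with j = i (mod M).  For every c, the word that is x at the r-th roots x
  of c and 0 elsewhere is orthogonal to the Tamo--Barg code C (no exponent i in S has r | i + 1,
  and power sums over a coset of the r-th roots of unity vanish) and to its dual (a nonzero
  multiple of it lies in C).  So each classical word z of CSS(C, C) satisfies the local checks
  sum (y^r = p^r) y z(y) = 0, which express z on an erased block linearly through z on the other
  r - 1 blocks of its group.  The recovery channel measures this syndrome and spreads the erased
  part uniformly over the dual-code shifts supported in the group, which fix every code state.
*)
theory Submission
  imports Defs "HOL-Library.Function_Algebras"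
begin

lemma finite_cfgs: "finite (cfgs (T :: 'p::finite set) :: ('p \<Rightarrow> 'a::{finite,zero}) set)"
  by (rule finite_subset[of _ UNIV]) auto

lemma zero_in_cfgs: "0 \<in> cfgs T"
  by (simp add: cfgs_def)

lemma cfgs_not_empty [simp]: "cfgs T \<noteq> {}"
  using zero_in_cfgs by blast

lemma card_cfgs_pos: "card (cfgs (T :: 'p::finite set) :: ('p \<Rightarrow> 'a::{finite,zero}) set) > 0"
  using finite_cfgs by (simp add: card_gt_0_iff)

lemma add_in_cfgs: "x \<in> cfgs T \<Longrightarrow> y \<in> cfgs T \<Longrightarrow> (x :: 'p \<Rightarrow> 'a::monoid_add) + y \<in> cfgs T"
  by (simp add: cfgs_def)

lemma diff_in_cfgs: "x \<in> cfgs T \<Longrightarrow> y \<in> cfgs T \<Longrightarrow> (x :: 'p \<Rightarrow> 'a::group_add) - y \<in> cfgs T"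
  by (simp add: cfgs_def)

lemma cfgs_mono: "T \<subseteq> U \<Longrightarrow> cfgs T \<subseteq> cfgs U"
  by (auto simp: cfgs_def)

lemma restr_in_cfgs: "restr T x \<in> cfgs T"
  by (simp add: cfgs_def restr_def)

lemma restr_add: "restr T (x + y) = restr T x + restr T (y :: 'p \<Rightarrow> 'a::monoid_add)"
  by (auto simp: restr_def)

lemma restr_cfgs: "x \<in> cfgs T \<Longrightarrow> restr T x = x"
  by (auto simp: restr_def cfgs_def)

lemma restr_cfgs_disjoint: "x \<in> cfgs U \<Longrightarrow> U \<inter> T = {} \<Longrightarrow> restr T x = 0"
  by (auto simp: restr_def cfgs_def fun_eq_iff)

lemma restr_restr: "restr T (restr U x) = restr (T \<inter> U) x"
  by (auto simp: restr_def)

lemma restr_add_restr_Diff: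
  "x \<in> cfgs B \<Longrightarrow> T \<subseteq> B \<Longrightarrow> restr T x + restr (B - T) x = (x :: 'p \<Rightarrow> 'a::monoid_add)"
  by (auto simp: restr_def cfgs_def)

lemma glue_glue_eq_add:
  assumes "u \<in> cfgs A" "v \<in> cfgs E" "w \<in> cfgs T" "A \<inter> T = {}" "E \<inter> T = {}" "A \<inter> E = {}"
    and "P - T = A \<union> E"
  shows "glue (P - T) (glue A u v) w = w + u + (v :: 'p \<Rightarrow> 'a::monoid_add)"
proof
  fix p
  have "p \<in> P - T \<longleftrightarrow> p \<in> A \<or> p \<in> E" using assms(7) by blast
  then show "glue (P - T) (glue A u v) w p = (w + u + v) p"
    using assms(1-6) unfolding glue_def cfgs_def plus_fun_def
    by (cases "p \<in> T"; cases "p \<in> A"; cases "p \<in> E") auto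
qed

lemma card_graph_cfgs:
  fixes T B :: "'p::finite set" and F :: "('p \<Rightarrow> 'a::{finite,monoid_add}) \<Rightarrow> 'p \<Rightarrow> 'a"
  assumes "T \<subseteq> B" and F: "\<And>u. F u \<in> cfgs (B - T)"
  shows "card {b \<in> cfgs B. restr (B - T) b = F (restr T b)} = card (cfgs T :: ('p \<Rightarrow> 'a) set)"
proof (rule bij_betw_same_card[of "restr T"], rule bij_betw_byWitness[where f' = "\<lambda>u. u + F u"])
  have "restr T (u + F u) = u" "restr (B - T) (u + F u) = F u" if "u \<in> cfgs T" for u
  proof -
    have "(B - T) \<inter> T = {}" "T \<inter> (B - T) = {}" by blast+
    then show "restr T (u + F u) = u" "restr (B - T) (u + F u) = F u"
      using that F[of u] by (simp_all add: restr_add restr_cfgs restr_cfgs_disjoint)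
  qed
  moreover have "u + F u \<in> cfgs B" if "u \<in> cfgs T" for u
    using that F[of u] cfgs_mono[of T B] cfgs_mono[of "B - T" B] \<open>T \<subseteq> B\<close>
    by (intro add_in_cfgs) auto
  ultimately show "(\<lambda>u. u + F u) ` cfgs T \<subseteq> {b \<in> cfgs B. restr (B - T) b = F (restr T b)}"
    and "\<forall>u\<in>cfgs T. restr T (u + F u) = u"
    by auto
  show "\<forall>b\<in>{b \<in> cfgs B. restr (B - T) b = F (restr T b)}. restr T b + F (restr T b) = b"
    using restr_add_restr_Diff \<open>T \<subseteq> B\<close> by force
qed (auto intro: restr_in_cfgs)

section \<open>Recovering an erased block by a linear decoder\<close>

text \<open>The Kraus operator \<open>K\<^sub>t\<close> keeps only inputs \<open>a\<close> with syndrome \<open>R a = t\<close> and maps \<open>|a\<rangle>\<close> to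
  the uniform superposition of \<open>|u\<rangle>\<close> (on \<open>T\<close>) \<open>\<otimes> |a - L t + L u\<rangle>\<close> (on \<open>B - T\<close>) over all \<open>u\<close>.\<close>
definition recovery_kraus ::
  "'p set \<Rightarrow> 'p set \<Rightarrow> (('p \<Rightarrow> 'a) \<Rightarrow> 'p \<Rightarrow> 'a) \<Rightarrow> (('p \<Rightarrow> 'a) \<Rightarrow> 'p \<Rightarrow> 'a)
     \<Rightarrow> ('p \<Rightarrow> 'a::ab_group_add) \<Rightarrow> ('p, 'a) qop" where
  "recovery_kraus T B R L t b a =
     (if R a = t \<and> restr (B - T) b = a + L (restr T b) - L t
      then complex_of_real (1 / sqrt (card (cfgs T :: ('p \<Rightarrow> 'a) set))) else 0)"

lemma norm_recovery_kraus_coeff: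
  "cnj (complex_of_real (1 / sqrt (card (cfgs T :: ('p::finite \<Rightarrow> 'a::{finite,zero}) set))))
     * complex_of_real (1 / sqrt (card (cfgs T :: ('p \<Rightarrow> 'a) set)))
   = 1 / of_nat (card (cfgs T :: ('p \<Rightarrow> 'a) set))"
  using card_cfgs_pos[of T, where 'a = 'a] by (simp add: of_real_mult[symmetric] del: of_real_mult)

lemma sum_cnj_recovery_kraus:
  fixes T B :: "'p::finite set" and L :: "('p \<Rightarrow> 'a::{finite,ab_group_add}) \<Rightarrow> 'p \<Rightarrow> 'a"
  assumes "T \<subseteq> B" and L: "\<And>u. L u \<in> cfgs (B - T)" and a: "a \<in> cfgs (B - T)"
  shows "(\<Sum>b\<in>cfgs B. cnj (recovery_kraus T B R L t b a) * recovery_kraus T B R L t b a')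
    = (if a = a' \<and> R a = t then 1 else 0)"
proof (cases "a = a' \<and> R a = t")
  case True
  then have [simp]: "a' = a" "R a = t" by auto
  define N where "N = card (cfgs T :: ('p \<Rightarrow> 'a) set)"
  have "N > 0" unfolding N_def by (rule card_cfgs_pos)
  define graph where "graph = {b \<in> cfgs B. restr (B - T) b = a + L (restr T b) - L t}"
  have "cnj (recovery_kraus T B R L t b a) * recovery_kraus T B R L t b a'
      = (if b \<in> graph then 1 / of_nat N else 0)" if "b \<in> cfgs B" for b
    using that norm_recovery_kraus_coeff[of T, where 'a = 'a]
    by (simp add: recovery_kraus_def graph_def N_def)
  then have "(\<Sum>b\<in>cfgs B. cnj (recovery_kraus T B R L t b a) * recovery_kraus T B R L t b a')
      = (\<Sum>b\<in>graph. 1 / of_nat N)"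
    by (simp add: sum.inter_filter[OF finite_cfgs, symmetric] graph_def)
  also have "\<dots> = of_nat N * (1 / of_nat N)"
    using card_graph_cfgs[OF \<open>T \<subseteq> B\<close>, of "\<lambda>u. a + L u - L t"] a L
    by (simp add: graph_def N_def add_in_cfgs diff_in_cfgs)
  also have "\<dots> = 1"
    using \<open>N > 0\<close> by simp
  finally show ?thesis by simp
next
  case False
  then have "recovery_kraus T B R L t b a = 0 \<or> recovery_kraus T B R L t b a' = 0" for b
    by (auto simp: recovery_kraus_def)
  then show ?thesis
    using False by (metis (no_types, lifting) complex_cnj_zero mult_eq_0_iff sum.neutral)
qed

lemma is_channel_recovery_kraus:
  fixes T B :: "'p::finite set" and R L :: "('p \<Rightarrow> 'a::{finite,ab_group_add}) \<Rightarrow> 'p \<Rightarrow> 'a"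
  assumes "T \<subseteq> B" and R: "\<And>a. R a \<in> cfgs T" and L: "\<And>u. L u \<in> cfgs (B - T)"
    and e: "bij_betw e {..<n} (cfgs T)"
  shows "is_channel (B - T) B n (\<lambda>k. recovery_kraus T B R L (e k))"
  unfolding is_channel_def
proof (intro ballI)
  fix a a' :: "'p \<Rightarrow> 'a" assume a: "a \<in> cfgs (B - T)"
  define F where "F t = (\<Sum>b\<in>cfgs B. cnj (recovery_kraus T B R L t b a) * recovery_kraus T B R L t b a')"
    for t
  have "(\<Sum>k<n. F (e k)) = (\<Sum>t\<in>cfgs T. F t)"
    by (rule sum.reindex_bij_betw[OF e])
  also have "\<dots> = (\<Sum>t\<in>cfgs T. if R a = t then (if a = a' then 1 else 0) else 0)"
    by (rule sum.cong) (auto simp: F_def sum_cnj_recovery_kraus[OF \<open>T \<subseteq> B\<close> L a])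
  also have "\<dots> = (if a = a' then 1 else 0)"
    using R by (simp add: sum.delta'[OF finite_cfgs])
  finally show "(\<Sum>k<n. \<Sum>b\<in>cfgs B. cnj (recovery_kraus T B R L (e k) b a) * recovery_kraus T B R L (e k) b a')
      = (if a = a' then 1 else 0)"
    by (simp add: F_def)
qed

lemma sum_sum_delta_cnj:
  fixes c :: complex
  assumes "finite S" "\<alpha> \<in> S" "\<beta> \<in> S"
  shows "(\<Sum>a\<in>S. \<Sum>a'\<in>S. (if a = \<alpha> \<and> P then c else 0) * G a a' * cnj (if a' = \<beta> \<and> Q then c else 0))
    = (if P \<and> Q then c * G \<alpha> \<beta> * cnj c else 0)"
proof -
  have "(\<Sum>a\<in>S. \<Sum>a'\<in>S. (if a = \<alpha> \<and> P then c else 0) * G a a' * cnj (if a' = \<beta> \<and> Q then c else 0))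
     = (\<Sum>a\<in>S. if a = \<alpha> \<and> P then (\<Sum>a'\<in>S. if a' = \<beta> \<and> Q then c * G a a' * cnj c else 0) else 0)"
    by (intro sum.cong refl) (auto intro!: sum.cong)
  also have "\<dots> = (if P \<and> Q then c * G \<alpha> \<beta> * cnj c else 0)"
    using assms by (cases P; cases Q) (simp_all add: sum.delta')
  finally show ?thesis .
qed

definition supported_in :: "'p set \<Rightarrow> ('p \<Rightarrow> 'a::zero) set \<Rightarrow> ('p, 'a) qop \<Rightarrow> bool" where
  "supported_in P W \<rho> \<longleftrightarrow> (\<forall>z\<in>cfgs P. \<forall>z'\<in>cfgs P. \<rho> z z' \<noteq> 0 \<longrightarrow> z \<in> W \<and> z' \<in> W)"

definition shift_invariant :: "'p set \<Rightarrow> ('p \<Rightarrow> 'a::monoid_add) set \<Rightarrow> ('p, 'a) qop \<Rightarrow> bool" where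
  "shift_invariant P D \<rho> \<longleftrightarrow>
     (\<forall>z\<in>cfgs P. \<forall>z'\<in>cfgs P. \<forall>d\<in>D \<inter> cfgs P. \<rho> (z + d) z' = \<rho> z z' \<and> \<rho> z (z' + d) = \<rho> z z')"

text \<open>Erasure of the positions \<open>T\<close> is corrected from \<open>B - T\<close>: on the classical support \<open>W\<close> the
  erased symbols are a linear function \<open>R\<close> of the surviving ones, and \<open>L\<close> lifts every pattern \<open>u\<close>
  on \<open>T\<close> to a shift \<open>u + L u\<close> under which the state is invariant.\<close>
locale linear_recovery =
  fixes P T B :: "'p::finite set" and W D :: "('p \<Rightarrow> 'a::{finite,ab_group_add}) set"
    and R L :: "('p \<Rightarrow> 'a) \<Rightarrow> 'p \<Rightarrow> 'a"
  assumes T_subset_B: "T \<subseteq> B" and B_subset_P: "B \<subseteq> P"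
    and additive_R: "additive R" and additive_L: "additive L"
    and R_in_cfgs: "R a \<in> cfgs T" and L_in_cfgs: "L u \<in> cfgs (B - T)"
    and restr_T_eq_R: "z \<in> cfgs P \<Longrightarrow> z \<in> W \<Longrightarrow> restr T z = R (restr (B - T) z)"
    and lift_in_D: "u \<in> cfgs T \<Longrightarrow> u + L u \<in> D"
    and D_subset_W: "D \<subseteq> W"
begin

lemma cfgs_subset_P: "cfgs T \<subseteq> cfgs P" "cfgs (B - T) \<subseteq> cfgs P" "cfgs (P - B) \<subseteq> cfgs P"
  using T_subset_B B_subset_P by (auto intro!: cfgs_mono)

lemma restr_T_lift: "u \<in> cfgs T \<Longrightarrow> restr T (u + L u) = u"
  and restr_B_Diff_lift: "u \<in> cfgs T \<Longrightarrow> restr (B - T) (u + L u) = L u"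
proof -
  have "(B - T) \<inter> T = {}" "T \<inter> (B - T) = {}" by blast+
  then show "u \<in> cfgs T \<Longrightarrow> restr T (u + L u) = u" "u \<in> cfgs T \<Longrightarrow> restr (B - T) (u + L u) = L u"
    using L_in_cfgs[of u] by (simp_all add: restr_add restr_cfgs restr_cfgs_disjoint)
qed

lemma lift_in_cfgs: "u \<in> cfgs T \<Longrightarrow> u + L u \<in> cfgs P"
  using cfgs_subset_P L_in_cfgs by (blast intro: add_in_cfgs)

lemma R_L: "u \<in> cfgs T \<Longrightarrow> R (L u) = u"
  using restr_T_eq_R[OF lift_in_cfgs] lift_in_D D_subset_W restr_T_lift restr_B_Diff_lift by force

lemma add_erased_notin_W:
  assumes "x \<in> cfgs P" "restr T x = R (restr (B - T) x)" "v \<in> cfgs T" "v \<noteq> 0"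
  shows "x + v \<notin> W"
proof
  assume "x + v \<in> W"
  have "restr (B - T) v = 0" using \<open>v \<in> cfgs T\<close> by (intro restr_cfgs_disjoint) auto
  then have "restr T x + v = R (restr (B - T) x)"
    using restr_T_eq_R[OF add_in_cfgs \<open>x + v \<in> W\<close>] assms(1,3) cfgs_subset_P
    by (auto simp: restr_add restr_cfgs)
  then show False using assms(2,4) by simp
qed

lemma R_add: "R (a + b) = R a + R b" and R_diff: "R (a - b) = R a - R b"
  and L_diff: "L (u - v) = L u - L v"
  using additive.add[OF additive_R] additive.diff[OF additive_R] additive.diff[OF additive_L] by blast+

definition kraus_source :: "('p \<Rightarrow> 'a) \<Rightarrow> ('p \<Rightarrow> 'a) \<Rightarrow> 'p \<Rightarrow> 'a" where
  "kraus_source x t = restr (B - T) x - L (restr T x) + L t"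

lemma kraus_source_in_cfgs: "kraus_source x t \<in> cfgs (B - T)"
  unfolding kraus_source_def using L_in_cfgs by (intro add_in_cfgs diff_in_cfgs restr_in_cfgs)

lemma recovery_kraus_restr_B:
  assumes "t \<in> cfgs T"
  shows "recovery_kraus T B R L t (restr B z) a =
    (if a = kraus_source z t \<and> restr T z = R (restr (B - T) z)
     then complex_of_real (1 / sqrt (card (cfgs T :: ('p \<Rightarrow> 'a) set))) else 0)"
proof -
  have restr_restr_B: "restr (B - T) (restr B z) = restr (B - T) z" "restr T (restr B z) = restr T z"
    using T_subset_B unfolding restr_restr by (metis Diff_subset Int_absorb2)+
  have R_kraus_source: "R (kraus_source z t) = R (restr (B - T) z) - restr T z + t"
    using R_L[OF restr_in_cfgs] R_L[OF assms] by (simp add: kraus_source_def R_add R_diff)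
  have R_source: "R (kraus_source z t) = t \<longleftrightarrow> restr T z = R (restr (B - T) z)"
    unfolding R_kraus_source by (simp add: algebra_simps eq_commute)
  have "restr (B - T) z = a + L (restr T z) - L t \<longleftrightarrow> a = kraus_source z t"
    unfolding kraus_source_def by (auto simp: algebra_simps)
  then have "(R a = t \<and> restr (B - T) z = a + L (restr T z) - L t) \<longleftrightarrow>
      (a = kraus_source z t \<and> restr T z = R (restr (B - T) z))"
    using R_source by metis
  then show ?thesis unfolding recovery_kraus_def restr_restr_B by presburger
qed

lemma glue_kraus_source:
  "t' \<in> cfgs T \<Longrightarrow> glue (P - T) (glue (B - T) (kraus_source x t) (restr (P - B) x)) t'
      = t' + kraus_source x t + restr (P - B) x"
  using T_subset_B B_subset_P
  by (intro glue_glue_eq_add[where E = "P - B"] kraus_source_in_cfgs restr_in_cfgs) auto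

lemma glue_kraus_source_in_cfgs:
  "t' \<in> cfgs T \<Longrightarrow> glue (P - T) (glue (B - T) (kraus_source x t) (restr (P - B) x)) t' \<in> cfgs P"
  unfolding glue_kraus_source using cfgs_subset_P kraus_source_in_cfgs restr_in_cfgs
  by (intro add_in_cfgs) blast+

lemma glue_kraus_source_add_lift:
  assumes "x \<in> cfgs P" "t' \<in> cfgs T"
  shows "glue (P - T) (glue (B - T) (kraus_source x t) (restr (P - B) x)) t'
      + (restr T x - t + L (restr T x - t)) = x + (t' - t)"
proof -
  have split: "restr T x + restr (B - T) x + restr (P - B) x = x"
    using assms(1) T_subset_B B_subset_P by (auto simp: restr_def cfgs_def fun_eq_iff)
  have "glue (P - T) (glue (B - T) (kraus_source x t) (restr (P - B) x)) t'
      + (restr T x - t + L (restr T x - t)) = restr T x + restr (B - T) x + restr (P - B) x + (t' - t)"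
    unfolding glue_kraus_source[OF assms(2)] by (simp add: kraus_source_def L_diff algebra_simps)
  then show ?thesis unfolding split .
qed

lemma ptrace_at_kraus_source:
  assumes supp: "supported_in P W \<rho>" and inv: "shift_invariant P D \<rho>"
    and x: "x \<in> cfgs P" and y: "y \<in> cfgs P" and t: "t \<in> cfgs T"
    and x_W: "restr T x = R (restr (B - T) x)" and y_W: "restr T y = R (restr (B - T) y)"
  shows "ptrace P T \<rho> (glue (B - T) (kraus_source x t) (restr (P - B) x))
      (glue (B - T) (kraus_source y t) (restr (P - B) y)) = \<rho> x y"
proof -
  let ?g = "\<lambda>x t'. glue (P - T) (glue (B - T) (kraus_source x t) (restr (P - B) x)) t'"
  \<comment> \<open>Shifting by lifts in \<open>D\<close> turns the summand for \<open>t'\<close> into the entry at \<open>x + (t' - t)\<close>,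
    \<open>y + (t' - t)\<close>, which lies outside the support \<open>W\<close> unless \<open>t' = t\<close>.\<close>
  have "\<rho> (?g x t') (?g y t') = (if t' = t then \<rho> x y else 0)" if t': "t' \<in> cfgs T" for t'
  proof -
    define dx where "dx = restr T x - t + L (restr T x - t)"
    define dy where "dy = restr T y - t + L (restr T y - t)"
    have d: "dx \<in> D \<inter> cfgs P" "dy \<in> D \<inter> cfgs P"
      unfolding dx_def dy_def using t
      by (auto intro!: lift_in_D lift_in_cfgs diff_in_cfgs restr_in_cfgs)
    have "?g x t' \<in> cfgs P" "?g y t' \<in> cfgs P"
      using glue_kraus_source_in_cfgs[OF t'] by blast+
    then have "\<rho> (?g x t') (?g y t') = \<rho> (?g x t' + dx) (?g y t' + dy)"
      using inv d add_in_cfgs[of _ P dy] unfolding shift_invariant_def by auto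
    also have "\<dots> = \<rho> (x + (t' - t)) (y + (t' - t))"
      using glue_kraus_source_add_lift[OF x t', where t = t] glue_kraus_source_add_lift[OF y t', where t = t]
      by (simp only: dx_def dy_def)
    also have "\<dots> = (if t' = t then \<rho> x y else 0)"
    proof (cases "t' = t")
      case False
      have "t' - t \<in> cfgs P" using t t' cfgs_subset_P by (blast intro: diff_in_cfgs)
      moreover have "x + (t' - t) \<notin> W"
        using add_erased_notin_W[OF x x_W diff_in_cfgs[OF t' t]] False by simp
      ultimately show ?thesis
        using supp add_in_cfgs[OF x] add_in_cfgs[OF y] False unfolding supported_in_def by metis
    qed simp
    finally show ?thesis .
  qed
  then have "ptrace P T \<rho> (glue (B - T) (kraus_source x t) (restr (P - B) x))
      (glue (B - T) (kraus_source y t) (restr (P - B) y)) = (\<Sum>t'\<in>cfgs T. if t' = t then \<rho> x y else 0)"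
    unfolding ptrace_def by (rule sum.cong[OF refl])
  also have "\<dots> = \<rho> x y"
    using t by (simp add: sum.delta'[OF finite_cfgs])
  finally show ?thesis .
qed

lemma sum_recovery_kraus_ptrace:
  assumes supp: "supported_in P W \<rho>" and inv: "shift_invariant P D \<rho>"
    and x: "x \<in> cfgs P" and y: "y \<in> cfgs P" and t: "t \<in> cfgs T"
  shows "(\<Sum>a\<in>cfgs (B - T). \<Sum>a'\<in>cfgs (B - T). recovery_kraus T B R L t (restr B x) a
      * ptrace P T \<rho> (glue (B - T) a (restr (P - B) x)) (glue (B - T) a' (restr (P - B) y))
      * cnj (recovery_kraus T B R L t (restr B y) a'))
    = (if restr T x = R (restr (B - T) x) \<and> restr T y = R (restr (B - T) y)
       then \<rho> x y / of_nat (card (cfgs T :: ('p \<Rightarrow> 'a) set)) else 0)"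
  (is "?lhs = _")
proof -
  define c where "c = complex_of_real (1 / sqrt (card (cfgs T :: ('p \<Rightarrow> 'a) set)))"
  define synd where "synd z \<longleftrightarrow> restr T z = R (restr (B - T) z)" for z
  have "?lhs = (\<Sum>a\<in>cfgs (B - T). \<Sum>a'\<in>cfgs (B - T). (if a = kraus_source x t \<and> synd x then c else 0)
      * ptrace P T \<rho> (glue (B - T) a (restr (P - B) x)) (glue (B - T) a' (restr (P - B) y))
      * cnj (if a' = kraus_source y t \<and> synd y then c else 0))"
    unfolding recovery_kraus_restr_B[OF t] c_def synd_def ..
  also have "\<dots> = (if synd x \<and> synd y then c * ptrace P T \<rho>
      (glue (B - T) (kraus_source x t) (restr (P - B) x))
      (glue (B - T) (kraus_source y t) (restr (P - B) y)) * cnj c else 0)"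
    by (rule sum_sum_delta_cnj[OF finite_cfgs kraus_source_in_cfgs kraus_source_in_cfgs])
  also have "\<dots> = (if synd x \<and> synd y then cnj c * c * \<rho> x y else 0)"
    using ptrace_at_kraus_source[OF supp inv x y t] by (simp add: synd_def)
  finally show ?thesis
    using norm_recovery_kraus_coeff[of T, where 'a = 'a] by (simp add: c_def synd_def)
qed

lemma recovery_kraus_recovers:
  assumes supp: "supported_in P W \<rho>" and inv: "shift_invariant P D \<rho>"
    and e: "bij_betw e {..<n} (cfgs T)" and x: "x \<in> cfgs P" and y: "y \<in> cfgs P"
  shows "apply_channel (B - T) B (P - B) n (\<lambda>k. recovery_kraus T B R L (e k)) (ptrace P T \<rho>) x y = \<rho> x y"
proof -
  define N where "N = card (cfgs T :: ('p \<Rightarrow> 'a) set)"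
  define synd where "synd z \<longleftrightarrow> restr T z = R (restr (B - T) z)" for z
  define G where "G t = (\<Sum>a\<in>cfgs (B - T). \<Sum>a'\<in>cfgs (B - T). recovery_kraus T B R L t (restr B x) a
      * ptrace P T \<rho> (glue (B - T) a (restr (P - B) x)) (glue (B - T) a' (restr (P - B) y))
      * cnj (recovery_kraus T B R L t (restr B y) a'))" for t
  have "apply_channel (B - T) B (P - B) n (\<lambda>k. recovery_kraus T B R L (e k)) (ptrace P T \<rho>) x y
      = (\<Sum>k<n. G (e k))"
    unfolding apply_channel_def G_def restr_restr ..
  also have "\<dots> = (\<Sum>t\<in>cfgs T. G t)"
    by (rule sum.reindex_bij_betw[OF e])
  also have "\<dots> = of_nat N * (if synd x \<and> synd y then \<rho> x y / of_nat N else 0)"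
    unfolding G_def by (simp add: sum_recovery_kraus_ptrace[OF supp inv x y] N_def synd_def)
  also have "\<dots> = \<rho> x y"
  proof (cases "synd x \<and> synd y")
    case True
    then show ?thesis using card_cfgs_pos[of T, where 'a = 'a] by (simp add: N_def)
  next
    case False
    then have "x \<notin> W \<or> y \<notin> W" using restr_T_eq_R x y unfolding synd_def by blast
    then show ?thesis using supp x y False unfolding supported_in_def by auto
  qed
  finally show ?thesis .
qed

end

section \<open>Code states of CSS codes\<close>

lemma coset_ket_eq: "coset_ket P D x z = (if z \<in> cfgs P \<and> (\<exists>y\<in>D. z = x + y) then 1 else 0)"
  unfolding coset_ket_def plus_fun_def by simp

lemma CSS_space_outside_support:
  fixes C D :: "('p \<Rightarrow> 'a::monoid_add) set"
  assumes "\<psi> \<in> CSS_space P C D" "z \<notin> {x + y |x y. x \<in> C \<and> y \<in> D}"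
  shows "\<psi> z = 0"
proof -
  obtain c where "\<psi> = (\<lambda>z. \<Sum>x\<in>C. c x * coset_ket P D x z)"
    using assms(1) unfolding CSS_space_def by auto
  moreover have "coset_ket P D x z = 0" if "x \<in> C" for x
    using assms(2) that by (auto simp: coset_ket_eq)
  ultimately show ?thesis by simp
qed

lemma CSS_space_shift:
  fixes D :: "('p \<Rightarrow> 'a::ab_group_add) set"
  assumes "\<psi> \<in> CSS_space P C D" and D_diff: "\<And>a b. a \<in> D \<Longrightarrow> b \<in> D \<Longrightarrow> a - b \<in> D"
    and "d \<in> D" "d \<in> cfgs P" "z \<in> cfgs P"
  shows "\<psi> (z + d) = \<psi> z"
proof -
  obtain c where \<psi>: "\<psi> = (\<lambda>z. \<Sum>x\<in>C. c x * coset_ket P D x z)"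
    using assms(1) unfolding CSS_space_def by auto
  have D_add: "y + d \<in> D" if "y \<in> D" for y
    using D_diff[OF that D_diff[OF D_diff[OF \<open>d \<in> D\<close> \<open>d \<in> D\<close>] \<open>d \<in> D\<close>]] by simp
  have "(\<exists>y\<in>D. z + d = x + y) \<longleftrightarrow> (\<exists>y\<in>D. z = x + y)" for x
  proof (intro iffI; elim bexE)
    fix y assume "y \<in> D" "z + d = x + y"
    then have "z = x + (y - d)" by (simp add: add_diff_eq eq_diff_eq)
    then show "\<exists>y\<in>D. z = x + y" using D_diff[OF \<open>y \<in> D\<close> \<open>d \<in> D\<close>] by blast
  next
    fix y assume "y \<in> D" "z = x + y"
    then show "\<exists>y\<in>D. z + d = x + y" using D_add by (metis add.assoc)
  qed
  moreover have "z + d \<in> cfgs P" using assms(4,5) by (simp add: add_in_cfgs)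
  ultimately have "coset_ket P D x (z + d) = coset_ket P D x z" for x
    using assms(5) by (simp add: coset_ket_eq)
  then show ?thesis using \<psi> by simp
qed

lemma code_state_CSS_supported_in:
  fixes C D :: "('p \<Rightarrow> 'a::monoid_add) set"
  assumes "code_state P (CSS_space P C D) \<rho>"
  shows "supported_in P {x + y |x y. x \<in> C \<and> y \<in> D} \<rho>"
proof -
  obtain n and pr :: "nat \<Rightarrow> real" and \<psi> where \<psi>: "\<forall>k<n. \<psi> k \<in> CSS_space P C D"
    and \<rho>: "\<forall>x\<in>cfgs P. \<forall>y\<in>cfgs P. \<rho> x y = (\<Sum>k<n. complex_of_real (pr k) * \<psi> k x * cnj (\<psi> k y))"
    using assms unfolding code_state_def by blast
  show ?thesis
    unfolding supported_in_def
  proof (intro ballI impI)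
    fix z z' assume z: "z \<in> cfgs P" and z': "z' \<in> cfgs P" and "\<rho> z z' \<noteq> 0"
    have "\<exists>k<n. \<psi> k z \<noteq> 0 \<and> \<psi> k z' \<noteq> 0"
    proof (rule ccontr)
      assume "\<not> (\<exists>k<n. \<psi> k z \<noteq> 0 \<and> \<psi> k z' \<noteq> 0)"
      then have "(\<Sum>k<n. complex_of_real (pr k) * \<psi> k z * cnj (\<psi> k z')) = 0"
        by (intro sum.neutral) auto
      then show False using \<rho> z z' \<open>\<rho> z z' \<noteq> 0\<close> by simp
    qed
    then show "z \<in> {x + y |x y. x \<in> C \<and> y \<in> D} \<and> z' \<in> {x + y |x y. x \<in> C \<and> y \<in> D}"
      using \<psi> CSS_space_outside_support by blast
  qed
qed

lemma code_state_CSS_shift_invariant: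
  fixes D :: "('p \<Rightarrow> 'a::ab_group_add) set"
  assumes "code_state P (CSS_space P C D) \<rho>" and "\<And>a b. a \<in> D \<Longrightarrow> b \<in> D \<Longrightarrow> a - b \<in> D"
  shows "shift_invariant P D \<rho>"
  unfolding shift_invariant_def
proof (intro ballI conjI)
  obtain n and pr :: "nat \<Rightarrow> real" and \<psi> where \<psi>: "\<forall>k<n. \<psi> k \<in> CSS_space P C D"
    and \<rho>: "\<forall>x\<in>cfgs P. \<forall>y\<in>cfgs P. \<rho> x y = (\<Sum>k<n. complex_of_real (pr k) * \<psi> k x * cnj (\<psi> k y))"
    using assms(1) unfolding code_state_def by blast
  fix z z' d :: "'p \<Rightarrow> 'a" assume z: "z \<in> cfgs P" and z': "z' \<in> cfgs P" and d: "d \<in> D \<inter> cfgs P"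
  have shift: "\<psi> k (w + d) = \<psi> k w" if "k < n" "w \<in> cfgs P" for k w
    using CSS_space_shift[OF _ assms(2)] \<psi> d that by blast
  have "z + d \<in> cfgs P" "z' + d \<in> cfgs P" using z z' d add_in_cfgs by blast+
  then have "\<rho> (z + d) z' = (\<Sum>k<n. complex_of_real (pr k) * \<psi> k z * cnj (\<psi> k z'))"
    and "\<rho> z (z' + d) = (\<Sum>k<n. complex_of_real (pr k) * \<psi> k z * cnj (\<psi> k z'))"
    using \<rho> z z' shift by simp_all
  then show "\<rho> (z + d) z' = \<rho> z z'" "\<rho> z (z' + d) = \<rho> z z'"
    using \<rho> z z' by simp_all
qed

theorem qLRC_CSS_linear_recovery:
  fixes P :: "'p::finite set" and blk :: "'i \<Rightarrow> 'p set" and C D :: "('p \<Rightarrow> 'a::{finite,ab_group_add}) set"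
  assumes D_diff: "\<And>a b. a \<in> D \<Longrightarrow> b \<in> D \<Longrightarrow> a - b \<in> D"
    and recovery: "\<And>i. i \<in> Qd \<Longrightarrow> \<exists>I R L. i \<in> I \<and> I \<subseteq> Qd \<and> finite I \<and> card I \<le> r
      \<and> (\<forall>j\<in>I - {i}. blk j \<inter> blk i = {})
      \<and> linear_recovery P (blk i) (\<Union>(blk ` I)) {x + y |x y. x \<in> C \<and> y \<in> D} D R L"
  shows "qLRC P Qd blk (CSS_space P C D) r"
  unfolding qLRC_def
proof
  fix i assume "i \<in> Qd"
  obtain I R L where I: "i \<in> I" "I \<subseteq> Qd" "finite I" "card I \<le> r"
    and disjoint: "\<forall>j\<in>I - {i}. blk j \<inter> blk i = {}"
    and lr: "linear_recovery P (blk i) (\<Union>(blk ` I)) {x + y |x y. x \<in> C \<and> y \<in> D} D R L"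
    using recovery[OF \<open>i \<in> Qd\<close>] by (elim exE conjE)
  interpret linear_recovery P "blk i" "\<Union>(blk ` I)" "{x + y |x y. x \<in> C \<and> y \<in> D}" D R L
    by (fact lr)
  have others: "\<Union>(blk ` (I - {i})) = \<Union>(blk ` I) - blk i"
    using I(1) disjoint by blast
  obtain e :: "nat \<Rightarrow> 'p \<Rightarrow> 'a" where e: "bij_betw e {..<card (cfgs (blk i) :: ('p \<Rightarrow> 'a) set)} (cfgs (blk i))"
    using ex_bij_betw_nat_finite[OF finite_cfgs[of "blk i", where 'a = 'a]]
    unfolding atLeast0LessThan by blast
  have channel: "is_channel (\<Union>(blk ` (I - {i}))) (\<Union>(blk ` I)) (card (cfgs (blk i) :: ('p \<Rightarrow> 'a) set))
      (\<lambda>k. recovery_kraus (blk i) (\<Union>(blk ` I)) R L (e k))"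
    unfolding others by (rule is_channel_recovery_kraus[OF T_subset_B R_in_cfgs L_in_cfgs e])
  have recovers: "apply_channel (\<Union>(blk ` (I - {i}))) (\<Union>(blk ` I)) (P - \<Union>(blk ` I))
      (card (cfgs (blk i) :: ('p \<Rightarrow> 'a) set)) (\<lambda>k. recovery_kraus (blk i) (\<Union>(blk ` I)) R L (e k))
      (ptrace P (blk i) \<rho>) x y = \<rho> x y"
    if cs: "code_state P (CSS_space P C D) \<rho>" and "x \<in> cfgs P" "y \<in> cfgs P" for \<rho> x y
    unfolding others
    by (rule recovery_kraus_recovers[OF code_state_CSS_supported_in[OF cs]
          code_state_CSS_shift_invariant[OF cs D_diff] e that(2,3)])
  show "\<exists>I. i \<in> I \<and> I \<subseteq> Qd \<and> finite I \<and> card I \<le> r \<and>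
      (\<exists>n K. is_channel (\<Union>(blk ` (I - {i}))) (\<Union>(blk ` I)) n K \<and>
        (\<forall>\<rho>. code_state P (CSS_space P C D) \<rho> \<longrightarrow> (\<forall>x\<in>cfgs P. \<forall>y\<in>cfgs P.
          apply_channel (\<Union>(blk ` (I - {i}))) (\<Union>(blk ` I)) (P - \<Union>(blk ` I)) n K
            (ptrace P (blk i) \<rho>) x y = \<rho> x y)))"
    by (intro exI[of _ I] conjI I exI[of _ "card (cfgs (blk i) :: ('p \<Rightarrow> 'a) set)"]
        exI[of _ "\<lambda>k. recovery_kraus (blk i) (\<Union>(blk ` I)) R L (e k)"] allI impI ballI channel recovers)
qed

section \<open>Finite fields with a primitive element\<close>

lemma field_power_card_minus_one:
  fixes x :: "'a::{finite,field}"
  assumes "x \<noteq> 0"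
  shows "x ^ (CARD('a) - 1) = 1"
proof -
  have "(\<Prod>y\<in>UNIV - {0}. x * y) = x ^ (CARD('a) - 1) * \<Prod>(UNIV - {0::'a})"
    by (simp add: prod.distrib card_Diff_subset)
  moreover have "(\<Prod>y\<in>UNIV - {0}. x * y) = (\<Prod>y\<in>UNIV - {0::'a}. y)"
    by (rule prod.reindex_bij_witness[of _ "\<lambda>y. y / x" "\<lambda>y. x * y"]) (use assms in auto)
  ultimately show ?thesis by simp
qed

lemma of_nat_CARD_field: "of_nat CARD('a) = (0::'a::{finite,field})"
proof -
  have "(\<Sum>x\<in>(UNIV::'a set). x + 1) = (\<Sum>x\<in>UNIV. x)"
    by (rule sum.reindex_bij_witness[of _ "\<lambda>y. y - 1" "\<lambda>y. y + 1"]) auto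
  then show ?thesis by (simp add: sum.distrib)
qed

lemma CARD_field_ge_2: "CARD('a::{finite,field}) \<ge> 2"
  using card_mono[of UNIV "{0::'a, 1}"] by simp

lemma card_nonzero_field: "card (- {0::'a::{finite,field}}) = CARD('a) - 1"
  by (simp add: Compl_eq_Diff_UNIV card_Diff_subset)

text \<open>Over the field with two elements the hypothesis on \<open>\<omega>\<close> also holds for \<open>\<omega> = 0\<close>, since \<open>1 = 0 ^ 0\<close>.\<close>
lemma generator_nonzero:
  fixes \<omega> :: "'a::{finite,field}"
  assumes "\<forall>x. x \<noteq> 0 \<longrightarrow> (\<exists>k. x = \<omega> ^ k)" "2 < CARD('a)"
  shows "\<omega> \<noteq> 0"
proof -
  have "UNIV \<noteq> {0, 1::'a}"
  proof
    assume "UNIV = {0, 1::'a}"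
    then have "CARD('a) = card {0, 1::'a}" by (rule arg_cong)
    then show False using assms(2) by simp
  qed
  then obtain x :: 'a where "x \<noteq> 0" "x \<noteq> 1" by blast
  then obtain k where "x = \<omega> ^ k" using assms(1) by blast
  then show ?thesis using \<open>x \<noteq> 0\<close> \<open>x \<noteq> 1\<close> by (cases k) auto
qed

locale cyclic_field =
  fixes \<omega> :: "'a::{finite,field}"
  assumes nonzero: "\<omega> \<noteq> 0" and generates: "x \<noteq> 0 \<Longrightarrow> \<exists>k. x = \<omega> ^ k"
begin

lemma power_mod_card: "\<omega> ^ (k mod (CARD('a) - 1)) = \<omega> ^ k"
proof -
  have "\<omega> ^ k = (\<omega> ^ (CARD('a) - 1)) ^ (k div (CARD('a) - 1)) * \<omega> ^ (k mod (CARD('a) - 1))"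
    unfolding power_mult[symmetric] power_add[symmetric] by simp
  then show ?thesis unfolding field_power_card_minus_one[OF nonzero] by simp
qed

lemma image_powers: "(\<lambda>k. \<omega> ^ k) ` {..<CARD('a) - 1} = - {0}"
proof
  show "- {0} \<subseteq> (\<lambda>k. \<omega> ^ k) ` {..<CARD('a) - 1}"
  proof
    fix x :: 'a assume "x \<in> - {0}"
    then obtain k where "x = \<omega> ^ k" using generates by blast
    then have "x = \<omega> ^ (k mod (CARD('a) - 1))" by (simp only: power_mod_card)
    moreover have "k mod (CARD('a) - 1) \<in> {..<CARD('a) - 1}"
      using CARD_field_ge_2[where 'a = 'a] by simp
    ultimately show "x \<in> (\<lambda>k. \<omega> ^ k) ` {..<CARD('a) - 1}" by (rule image_eqI)
  qed
qed (use nonzero in auto)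

lemma inj_on_powers: "inj_on (\<lambda>k. \<omega> ^ k) {..<CARD('a) - 1}"
  by (rule eq_card_imp_inj_on) (simp_all only: image_powers card_nonzero_field card_lessThan finite_lessThan)

lemma power_eq_power_iff: "\<omega> ^ a = \<omega> ^ b \<longleftrightarrow> a mod (CARD('a) - 1) = b mod (CARD('a) - 1)"
proof -
  have "\<omega> ^ a = \<omega> ^ b \<longleftrightarrow> \<omega> ^ (a mod (CARD('a) - 1)) = \<omega> ^ (b mod (CARD('a) - 1))"
    by (simp only: power_mod_card)
  also have "\<dots> \<longleftrightarrow> a mod (CARD('a) - 1) = b mod (CARD('a) - 1)"
    using CARD_field_ge_2[where 'a = 'a] by (intro inj_on_eq_iff[OF inj_on_powers]) simp_all
  finally show ?thesis .
qed

lemma rth_power_eq_iff: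
  assumes "CARD('a) - 1 = r * n" "0 < r"
  shows "(\<omega> ^ a) ^ r = (\<omega> ^ b) ^ r \<longleftrightarrow> a mod n = b mod n"
proof -
  have "(\<omega> ^ a) ^ r = (\<omega> ^ b) ^ r \<longleftrightarrow> \<omega> ^ (a * r) = \<omega> ^ (b * r)"
    by (simp only: power_mult)
  also have "\<dots> \<longleftrightarrow> (a * r) mod (n * r) = (b * r) mod (n * r)"
    unfolding power_eq_power_iff assms(1) mult.commute[of r n] ..
  also have "\<dots> \<longleftrightarrow> a mod n = b mod n"
    using assms(2) by (simp add: mod_mult_mult2)
  finally show ?thesis .
qed

lemma primitive_root_of_unity:
  assumes "r dvd CARD('a) - 1" "\<not> r dvd e"
  obtains g :: 'a where "g \<noteq> 0" "g ^ r = 1" "g ^ e \<noteq> 1"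
proof -
  define m where "m = (CARD('a) - 1) div r"
  have card_eq: "CARD('a) - 1 = m * r"
    unfolding m_def by (rule dvd_div_mult_self[OF assms(1), symmetric])
  have "0 < m"
  proof (rule ccontr)
    assume "\<not> 0 < m"
    then have "CARD('a) - 1 = 0" using card_eq by simp
    then show False using CARD_field_ge_2[where 'a = 'a] by simp
  qed
  have "\<omega> ^ m \<noteq> 0" using nonzero by simp
  moreover have "(\<omega> ^ m) ^ r = 1"
    unfolding power_mult[symmetric] card_eq[symmetric] by (rule field_power_card_minus_one[OF nonzero])
  moreover have "(\<omega> ^ m) ^ e \<noteq> 1"
  proof
    assume "(\<omega> ^ m) ^ e = 1"
    then have "(\<omega> ^ e) ^ m = (\<omega> ^ 0) ^ m"
      unfolding power_mult[symmetric] by (simp only: mult.commute mult_zero_left power_0)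
    then have "e mod r = 0"
      using rth_power_eq_iff[OF card_eq \<open>0 < m\<close>, of e 0] by simp
    then show False using assms(2) by (simp add: dvd_eq_mod_eq_0)
  qed
  ultimately show thesis by (rule that)
qed

end

lemma sum_rth_roots_power_eq_0_if_root_of_unity:
  fixes g c :: "'a::{finite,field}"
  assumes "g \<noteq> 0" "g ^ r = 1" "g ^ e \<noteq> 1"
  shows "(\<Sum>y | y \<noteq> 0 \<and> y ^ r = c. y ^ e) = 0"
proof -
  let ?G = "{y. y \<noteq> 0 \<and> y ^ r = c}"
  have "(\<Sum>y\<in>?G. (g * y) ^ e) = (\<Sum>y\<in>?G. y ^ e)"
  proof (rule sum.reindex_bij_witness[of _ "\<lambda>y. y / g" "\<lambda>y. g * y"])
    fix y assume "y \<in> ?G"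
    then show "g * y / g = y" "g * y \<in> ?G" "g * (y / g) = y" "y / g \<in> ?G"
      using assms(1,2) by (simp_all add: power_mult_distrib power_divide)
  qed simp
  moreover have "(\<Sum>y\<in>?G. (g * y) ^ e) = g ^ e * (\<Sum>y\<in>?G. y ^ e)"
    by (simp add: power_mult_distrib sum_distrib_left)
  ultimately have "(g ^ e - 1) * (\<Sum>y\<in>?G. y ^ e) = 0"
    by (simp add: left_diff_distrib)
  then show ?thesis using assms(3) by simp
qed

lemma (in cyclic_field) sum_rth_roots_power_eq_0:
  fixes c :: 'a
  assumes "r dvd CARD('a) - 1" "\<not> r dvd e"
  shows "(\<Sum>y | y \<noteq> 0 \<and> y ^ r = c. y ^ e) = 0"
  using primitive_root_of_unity[OF assms] sum_rth_roots_power_eq_0_if_root_of_unity by metis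

section \<open>Local parity checks of Tamo--Barg codes\<close>

definition root_word :: "nat \<Rightarrow> 'a::field \<Rightarrow> 'a \<Rightarrow> 'a" where
  "root_word r c x = (if x \<noteq> 0 \<and> x ^ r = c then x else 0)"

lemma sum_root_word_mult:
  fixes c :: "'a::{finite,field}"
  shows "(\<Sum>x\<in>- {0}. root_word r c x * z x) = (\<Sum>y | y \<noteq> 0 \<and> y ^ r = c. y * z y)"
proof -
  have "(\<Sum>x\<in>- {0}. root_word r c x * z x) = (\<Sum>x\<in>- {0}. if x ^ r = c then x * z x else 0)"
    by (rule sum.cong) (auto simp: root_word_def)
  also have "\<dots> = (\<Sum>y\<in>{x \<in> - {0}. x ^ r = c}. y * z y)"
    by (rule sum.inter_filter[symmetric]) simp
  also have "{x \<in> - {0}. x ^ r = c} = {y. y \<noteq> 0 \<and> y ^ r = c}"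
    by auto
  finally show ?thesis .
qed

lemma not_dvd_Suc_if_in_TB_S:
  assumes "i \<in> TB_S q r l" "3 \<le> r"
  shows "\<not> r dvd Suc i"
proof
  assume "r dvd Suc i"
  then have "Suc (i mod r) = r"
    using assms(2) mod_less_divisor[of r i] by (auto simp: dvd_eq_mod_eq_0 mod_Suc split: if_splits)
  then show False using assms unfolding TB_S_def by auto
qed

lemma (in cyclic_field) TB_code_orthogonal_root_word:
  fixes c :: 'a
  assumes "r dvd CARD('a) - 1" "3 \<le> r" "w \<in> TB_code r l"
  shows "(\<Sum>x\<in>- {0}. w x * root_word r c x) = 0"
proof -
  obtain f where w: "w = ev f" and coeff_f: "\<And>i. i \<notin> TB_S CARD('a) r l \<Longrightarrow> coeff f i = 0"
    using assms(3) unfolding TB_code_def by auto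
  let ?G = "{y. y \<noteq> 0 \<and> y ^ r = c}"
  have "(\<Sum>x\<in>- {0}. w x * root_word r c x) = (\<Sum>y\<in>?G. y * poly f y)"
    unfolding sum_root_word_mult[of r c w, unfolded mult.commute[of _ "w _"]]
    by (rule sum.cong) (auto simp: w ev_def)
  also have "\<dots> = (\<Sum>y\<in>?G. \<Sum>i\<le>degree f. coeff f i * y ^ Suc i)"
    by (simp add: poly_altdef sum_distrib_left mult_ac)
  also have "\<dots> = (\<Sum>i\<le>degree f. coeff f i * (\<Sum>y\<in>?G. y ^ Suc i))"
    by (subst sum.swap) (simp add: sum_distrib_left)
  also have "\<dots> = 0"
  proof (rule sum.neutral, rule ballI)
    fix i
    show "coeff f i * (\<Sum>y\<in>?G. y ^ Suc i) = 0"
    proof (cases "i \<in> TB_S CARD('a) r l")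
      case True
      then show ?thesis
        using sum_rth_roots_power_eq_0[OF assms(1) not_dvd_Suc_if_in_TB_S[OF True assms(2)]] by simp
    qed (simp add: coeff_f)
  qed
  finally show ?thesis .
qed

definition root_word_poly :: "nat \<Rightarrow> nat \<Rightarrow> 'a::field \<Rightarrow> 'a poly" where
  "root_word_poly r m c = (\<Sum>j<m. monom (inverse c ^ j) (Suc (r * j)))"

lemma ev_root_word_poly_in_TB_code:
  fixes c :: "'a::{finite,field}"
  assumes "CARD('a) - 1 = r * m" "1 < r"
  shows "ev (root_word_poly r m c) \<in> TB_code r l"
  unfolding TB_code_def
proof (intro CollectI exI[of _ "root_word_poly r m c"] conjI refl allI impI)
  fix i assume i: "i \<notin> TB_S CARD('a) r l"
  have "Suc (r * j) \<in> TB_S CARD('a) r l" if "j < m" for j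
  proof -
    have "r * j + r \<le> CARD('a) - 1"
      using that assms(1) by (metis Suc_leI add.commute mult_Suc_right mult_le_mono2)
    then have "Suc (r * j) < CARD('a) - 1" using assms(2) by linarith
    moreover have "Suc (r * j) mod r = 1" using assms(2) by (simp add: mod_Suc)
    ultimately show ?thesis by (simp add: TB_S_def)
  qed
  then have "Suc (r * j) \<noteq> i" if "j < m" for j using i that by blast
  then show "coeff (root_word_poly r m c) i = 0"
    by (auto simp: root_word_poly_def coeff_sum coeff_monom intro!: sum.neutral)
qed

lemma poly_root_word_poly:
  fixes x c :: "'a::{finite,field}"
  assumes "CARD('a) - 1 = r * m" "c \<noteq> 0" "c ^ m = 1" "x \<noteq> 0"
  shows "poly (root_word_poly r m c) x = of_nat m * root_word r c x"
proof -
  have "(x ^ j) ^ r = (x ^ r) ^ j" for j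
    by (simp flip: power_mult add: mult.commute)
  then have "poly (root_word_poly r m c) x = x * (\<Sum>j<m. (x ^ r / c) ^ j)"
    by (simp add: root_word_poly_def poly_sum poly_monom sum_distrib_left power_mult power_divide
        field_simps)
  also have "\<dots> = of_nat m * root_word r c x"
  proof (cases "x ^ r = c")
    case True
    then show ?thesis using assms(2,4) by (simp add: root_word_def)
  next
    case False
    then have "x ^ r / c \<noteq> 1" using assms(2) by simp
    moreover have "(x ^ r / c) ^ m = 1"
      using field_power_card_minus_one[OF assms(4)] assms(1,3)
      by (simp add: power_divide flip: power_mult)
    ultimately have "(\<Sum>j<m. (x ^ r / c) ^ j) = 0" by (simp add: geometric_sum)
    then show ?thesis using False by (simp add: root_word_def)
  qed
  finally show ?thesis .
qed

lemma of_nat_card_quotient_nonzero: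
  assumes "CARD('a) - 1 = r * m"
  shows "(of_nat m :: 'a::{finite,field}) \<noteq> 0"
proof
  assume "(of_nat m :: 'a) = 0"
  then have "(of_nat (CARD('a) - 1) :: 'a) = 0" unfolding assms by simp
  moreover have "(of_nat (CARD('a) - 1) :: 'a) = - 1"
    using of_nat_CARD_field[where 'a = 'a] CARD_field_ge_2[where 'a = 'a] by (simp add: of_nat_diff)
  ultimately show False by simp
qed

lemma dual_TB_code_orthogonal_root_word:
  fixes p :: "'a::{finite,field}"
  assumes "r dvd CARD('a) - 1" "1 < r" "z \<in> dual_code (TB_code r l)" "p \<noteq> 0"
  shows "(\<Sum>x\<in>- {0}. root_word r (p ^ r) x * z x) = 0"
proof -
  define m where "m = (CARD('a) - 1) div r"
  have card_eq: "CARD('a) - 1 = r * m"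
    unfolding m_def using assms(1) by simp
  have "p ^ r \<noteq> 0" "(p ^ r) ^ m = 1"
    using assms(4) field_power_card_minus_one[OF assms(4)] card_eq by (simp_all flip: power_mult)
  have "0 = (\<Sum>x\<in>- {0}. ev (root_word_poly r m (p ^ r)) x * z x)"
    using assms(3) ev_root_word_poly_in_TB_code[OF card_eq assms(2)] unfolding dual_code_def by auto
  also have "\<dots> = of_nat m * (\<Sum>x\<in>- {0}. root_word r (p ^ r) x * z x)"
    unfolding sum_distrib_left
    by (rule sum.cong) (auto simp: ev_def poly_root_word_poly[OF card_eq \<open>p ^ r \<noteq> 0\<close> \<open>(p ^ r) ^ m = 1\<close>])
  finally show ?thesis using of_nat_card_quotient_nonzero[OF card_eq] by simp
qed

lemma dual_code_diff: "a \<in> dual_code C \<Longrightarrow> b \<in> dual_code C \<Longrightarrow> a - b \<in> dual_code C"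
  by (simp add: dual_code_def cfgs_def right_diff_distrib sum_subtractf)

lemma zero_in_TB_code: "0 \<in> TB_code r l"
  unfolding TB_code_def by (intro CollectI exI[of _ 0]) (auto simp: ev_def fun_eq_iff)

text \<open>\<open>parity_solve\<close> solves the local parity check \<open>\<Sum>\<^bsub>y\<^sup>r = p\<^sup>r\<^esub> y z(y) = 0\<close> for the erased symbol
  \<open>z p\<close>; \<open>parity_lift\<close> completes a pattern \<open>u\<close> on \<open>T\<close> to the combination
  \<open>\<Sum>\<^bsub>p\<in>T\<^esub> (u p / p) root_word r (p\<^sup>r)\<close> of parity checks.\<close>
definition parity_solve :: "nat \<Rightarrow> 'a set \<Rightarrow> ('a \<Rightarrow> 'a) \<Rightarrow> 'a \<Rightarrow> 'a::field" where
  "parity_solve r T a p =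
     (if p \<in> T then - (\<Sum>y\<in>{y. y \<noteq> 0 \<and> y ^ r = p ^ r} - {p}. y * a y) / p else 0)"

definition parity_lift :: "nat \<Rightarrow> 'a set \<Rightarrow> 'a set \<Rightarrow> ('a \<Rightarrow> 'a) \<Rightarrow> 'a \<Rightarrow> 'a::field" where
  "parity_lift r T A u y = (if y \<in> A then (\<Sum>p\<in>T. if p ^ r = y ^ r then u p * y / p else 0) else 0)"

lemma additive_parity_solve: "additive (parity_solve r T)"
proof
  fix a b :: "'a \<Rightarrow> 'a"
  show "parity_solve r T (a + b) = parity_solve r T a + parity_solve r T b"
  proof
    fix p :: 'a
    let ?G = "{y. y \<noteq> 0 \<and> y ^ r = p ^ r} - {p}"
    have "(\<Sum>y\<in>?G. y * (a + b) y) = (\<Sum>y\<in>?G. y * a y) + (\<Sum>y\<in>?G. y * b y)"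
      by (simp add: distrib_left sum.distrib)
    then show "parity_solve r T (a + b) p = (parity_solve r T a + parity_solve r T b) p"
      by (simp add: parity_solve_def diff_divide_distrib)
  qed
qed

lemma additive_parity_lift: "additive (parity_lift r T A)"
proof
  fix u v :: "'a \<Rightarrow> 'a"
  show "parity_lift r T A (u + v) = parity_lift r T A u + parity_lift r T A v"
  proof
    fix y :: 'a
    have "(\<Sum>p\<in>T. if p ^ r = y ^ r then (u + v) p * y / p else 0)
        = (\<Sum>p\<in>T. if p ^ r = y ^ r then u p * y / p else 0) + (\<Sum>p\<in>T. if p ^ r = y ^ r then v p * y / p else 0)"
      unfolding sum.distrib[symmetric] by (rule sum.cong) (simp_all add: distrib_right add_divide_distrib)
    then show "parity_lift r T A (u + v) y = (parity_lift r T A u + parity_lift r T A v) y"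
      by (simp add: parity_lift_def)
  qed
qed

lemma restr_eq_parity_solve:
  fixes T B :: "'a::{finite,field} set"
  assumes "T \<subseteq> - {0}" and fibres_in_B: "\<And>p y. p \<in> T \<Longrightarrow> y \<noteq> 0 \<Longrightarrow> y ^ r = p ^ r \<Longrightarrow> y \<in> B"
    and inj: "inj_on (\<lambda>x. x ^ r) T"
    and parity: "\<And>p. p \<in> T \<Longrightarrow> (\<Sum>y | y \<noteq> 0 \<and> y ^ r = p ^ r. y * z y) = 0"
  shows "restr T z = parity_solve r T (restr (B - T) z)"
proof
  fix p
  show "restr T z p = parity_solve r T (restr (B - T) z) p"
  proof (cases "p \<in> T")
    case True
    let ?G = "{y. y \<noteq> 0 \<and> y ^ r = p ^ r}"
    have "p \<noteq> 0" using True assms(1) by blast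
    have "restr (B - T) z y = z y" if "y \<in> ?G - {p}" for y
    proof -
      have "y \<in> B" using that fibres_in_B[OF True] by blast
      moreover have "y \<notin> T" using that inj_onD[OF inj, of y p] True by auto
      ultimately show ?thesis by (simp add: restr_def)
    qed
    then have "(\<Sum>y\<in>?G - {p}. y * restr (B - T) z y) = (\<Sum>y\<in>?G - {p}. y * z y)"
      by simp
    moreover have "p * z p + (\<Sum>y\<in>?G - {p}. y * z y) = 0"
      using parity[OF True] \<open>p \<noteq> 0\<close> by (simp add: sum.remove[of ?G p])
    ultimately show ?thesis
      using True \<open>p \<noteq> 0\<close> by (simp add: parity_solve_def restr_def field_simps eq_neg_iff_add_eq_0)
  qed (simp add: parity_solve_def restr_def)
qed

lemma add_parity_lift_eq_sum_root_word:
  fixes T B :: "'a::{finite,field} set"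
  assumes "T \<subseteq> B" "B \<subseteq> - {0}" "u \<in> cfgs T" "x \<noteq> 0"
    and fibres_in_B: "\<And>p y. p \<in> T \<Longrightarrow> y \<noteq> 0 \<Longrightarrow> y ^ r = p ^ r \<Longrightarrow> y \<in> B"
    and inj: "inj_on (\<lambda>x. x ^ r) T"
  shows "(u + parity_lift r T (B - T) u) x = (\<Sum>p\<in>T. u p / p * root_word r (p ^ r) x)"
proof (cases "x \<in> T")
  case True
  have "(\<Sum>p\<in>T. u p / p * root_word r (p ^ r) x) = (\<Sum>p\<in>T. if p = x then u p / p * x else 0)"
    using inj_onD[OF inj _ _ True] assms(4) by (intro sum.cong refl) (auto simp: root_word_def)
  also have "\<dots> = u x" using True assms(1,2) by auto
  finally show ?thesis using True by (simp add: parity_lift_def)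
next
  case False
  have "u x = 0" using assms(3) False by (simp add: cfgs_def)
  show ?thesis
  proof (cases "x \<in> B")
    case True
    then show ?thesis using \<open>u x = 0\<close> False assms(4)
      by (auto simp: parity_lift_def root_word_def intro!: sum.cong)
  next
    case False
    have "(\<Sum>p\<in>T. u p / p * root_word r (p ^ r) x) = 0"
      using fibres_in_B assms(4) False by (intro sum.neutral) (auto simp: root_word_def)
    then show ?thesis using \<open>u x = 0\<close> False by (simp add: parity_lift_def)
  qed
qed

lemma sum_fibre_eq_0_if_in_code_plus_dual:
  fixes C :: "('a::{finite,field} \<Rightarrow> 'a) set"
  assumes C_orth: "\<And>w c. w \<in> C \<Longrightarrow> (\<Sum>x\<in>- {0}. w x * root_word r c x) = 0"
    and D_orth: "\<And>z p. z \<in> dual_code C \<Longrightarrow> p \<noteq> 0 \<Longrightarrow> (\<Sum>x\<in>- {0}. root_word r (p ^ r) x * z x) = 0"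
    and "z \<in> {x + y |x y. x \<in> C \<and> y \<in> dual_code C}" "p \<noteq> 0"
  shows "(\<Sum>y | y \<noteq> 0 \<and> y ^ r = p ^ r. y * z y) = 0"
proof -
  obtain w d where z: "z = w + d" "w \<in> C" "d \<in> dual_code C" using assms(3) by blast
  have "(\<Sum>y | y \<noteq> 0 \<and> y ^ r = p ^ r. y * z y) = (\<Sum>x\<in>- {0}. root_word r (p ^ r) x * z x)"
    by (rule sum_root_word_mult[symmetric])
  also have "\<dots> = (\<Sum>x\<in>- {0}. w x * root_word r (p ^ r) x) + (\<Sum>x\<in>- {0}. root_word r (p ^ r) x * d x)"
    by (simp add: z(1) sum.distrib algebra_simps)
  also have "\<dots> = 0" using C_orth[OF z(2)] D_orth[OF z(3) \<open>p \<noteq> 0\<close>] by simp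
  finally show ?thesis .
qed

lemma add_parity_lift_in_dual_code:
  fixes T B :: "'a::{finite,field} set" and C :: "('a \<Rightarrow> 'a) set"
  assumes "T \<subseteq> B" "B \<subseteq> - {0}" "u \<in> cfgs T"
    and fibres_in_B: "\<And>p y. p \<in> T \<Longrightarrow> y \<noteq> 0 \<Longrightarrow> y ^ r = p ^ r \<Longrightarrow> y \<in> B"
    and inj: "inj_on (\<lambda>x. x ^ r) T"
    and C_orth: "\<And>w c. w \<in> C \<Longrightarrow> (\<Sum>x\<in>- {0}. w x * root_word r c x) = 0"
  shows "u + parity_lift r T (B - T) u \<in> dual_code C"
proof -
  have "(\<Sum>x\<in>- {0}. w x * (u + parity_lift r T (B - T) u) x) = 0" if "w \<in> C" for w
  proof -
    have "(\<Sum>x\<in>- {0}. w x * (u + parity_lift r T (B - T) u) x)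
        = (\<Sum>x\<in>- {0}. \<Sum>p\<in>T. u p / p * (w x * root_word r (p ^ r) x))"
      using add_parity_lift_eq_sum_root_word[OF assms(1-3) _ fibres_in_B inj]
      by (intro sum.cong refl) (simp add: sum_distrib_left mult.left_commute)
    also have "\<dots> = (\<Sum>p\<in>T. u p / p * (\<Sum>x\<in>- {0}. w x * root_word r (p ^ r) x))"
      by (subst sum.swap) (simp add: sum_distrib_left)
    also have "\<dots> = 0" using C_orth[OF that] by simp
    finally show ?thesis .
  qed
  moreover have "u + parity_lift r T (B - T) u \<in> cfgs (- {0})"
    using assms(1-3) by (auto simp: cfgs_def parity_lift_def)
  ultimately show ?thesis
    by (simp add: dual_code_def)
qed

lemma linear_recovery_parity:
  fixes T B :: "'a::{finite,field} set" and C :: "('a \<Rightarrow> 'a) set"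
  assumes "T \<subseteq> B" "B \<subseteq> - {0}"
    and fibres_in_B: "\<And>p y. p \<in> T \<Longrightarrow> y \<noteq> 0 \<Longrightarrow> y ^ r = p ^ r \<Longrightarrow> y \<in> B"
    and inj: "inj_on (\<lambda>x. x ^ r) T" and "0 \<in> C"
    and C_orth: "\<And>w c. w \<in> C \<Longrightarrow> (\<Sum>x\<in>- {0}. w x * root_word r c x) = 0"
    and D_orth: "\<And>z p. z \<in> dual_code C \<Longrightarrow> p \<noteq> 0 \<Longrightarrow> (\<Sum>x\<in>- {0}. root_word r (p ^ r) x * z x) = 0"
  shows "linear_recovery (- {0}) T B {x + y |x y. x \<in> C \<and> y \<in> dual_code C} (dual_code C)
    (parity_solve r T) (parity_lift r T (B - T))"
proof
  fix z assume "z \<in> {x + y |x y. x \<in> C \<and> y \<in> dual_code C}"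
  then have "(\<Sum>y | y \<noteq> 0 \<and> y ^ r = p ^ r. y * z y) = 0" if "p \<in> T" for p
    using sum_fibre_eq_0_if_in_code_plus_dual[OF C_orth D_orth] that assms(1,2) by blast
  then show "restr T z = parity_solve r T (restr (B - T) z)"
    using assms(1,2) fibres_in_B inj by (intro restr_eq_parity_solve) auto
next
  show "u + parity_lift r T (B - T) u \<in> dual_code C" if "u \<in> cfgs T" for u
    by (rule add_parity_lift_in_dual_code[OF assms(1,2) that fibres_in_B inj C_orth])
  show "dual_code C \<subseteq> {x + y |x y. x \<in> C \<and> y \<in> dual_code C}"
    using \<open>0 \<in> C\<close> by force
qed (use assms(1,2) in \<open>auto simp: additive.add[OF additive_parity_solve] additive.add[OF additive_parity_lift]
    cfgs_def parity_solve_def parity_lift_def\<close>)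

section \<open>Folding\<close>

lemma mult_add_less_eq_iff:
  fixes a b t t' s :: nat
  assumes "t < s" "t' < s"
  shows "s * a + t = s * b + t' \<longleftrightarrow> a = b \<and> t = t'"
proof
  assume eq: "s * a + t = s * b + t'"
  have "a = (s * a + t) div s" "b = (s * b + t') div s" "t = (s * a + t) mod s" "t' = (s * b + t') mod s"
    using assms by simp_all
  then show "a = b \<and> t = t'" unfolding eq by simp
qed simp

lemma card_residue_class_le: "card {j. j < k * M \<and> j mod M = c} \<le> k"
proof -
  have "{j. j < k * M \<and> j mod M = c} \<subseteq> (\<lambda>q. c + q * M) ` {..<k}"
  proof
    fix j assume j: "j \<in> {j. j < k * M \<and> j mod M = c}"
    then have "j = c + j div M * M" using mod_div_mult_eq[of j M] by simp
    moreover have "j div M < k" using j by (simp add: less_mult_imp_div_less)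
    ultimately show "j \<in> (\<lambda>q. c + q * M) ` {..<k}" by blast
  qed
  then have "card {j. j < k * M \<and> j mod M = c} \<le> card ((\<lambda>q. c + q * M) ` {..<k})"
    by (intro card_mono) auto
  also have "\<dots> \<le> k" using card_image_le[of "{..<k}" "\<lambda>q. c + q * M"] by simp
  finally show ?thesis .
qed

context cyclic_field
begin

lemma fold_blk_subset_nonzero: "fold_blk s \<omega> j \<subseteq> - {0}"
  using nonzero by (auto simp: fold_blk_def)

lemma fold_blk_disjoint:
  assumes "CARD('a) - 1 = s * N" "j < N" "j' < N" "j \<noteq> j'"
  shows "fold_blk s \<omega> j \<inter> fold_blk s \<omega> j' = {}"
proof (rule ccontr)
  assume "fold_blk s \<omega> j \<inter> fold_blk s \<omega> j' \<noteq> {}"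
  then obtain t t' where t: "t < s" "t' < s" and eq: "\<omega> ^ (s * j + t) = \<omega> ^ (s * j' + t')"
    by (auto simp: fold_blk_def)
  have "s * a + u < CARD('a) - 1" if "a < N" "u < s" for a u
  proof -
    have "s * a + u < s * Suc a" using that(2) by simp
    also have "\<dots> \<le> s * N" using that(1) by (intro mult_le_mono2) simp
    finally show ?thesis unfolding assms(1) .
  qed
  then have "s * j + t = s * j' + t'"
    using inj_onD[OF inj_on_powers eq] t assms(2,3) by simp
  then show False using mult_add_less_eq_iff[OF t] assms(4) by simp
qed

lemma fold_blk_mod:
  assumes "x \<in> fold_blk s \<omega> i"
  obtains t where "t < s" "x = \<omega> ^ (s * i + t)" "(s * i + t) mod (s * M) = s * (i mod M) + t"
proof -
  obtain t where t: "t < s" "x = \<omega> ^ (s * i + t)" using assms by (auto simp: fold_blk_def)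
  moreover have "(s * i + t) mod (s * M) = s * (i mod M) + t"
    using t(1) by (simp add: mod_mult2_eq)
  ultimately show thesis using that by blast
qed

lemma inj_on_rth_power_fold_blk:
  assumes "CARD('a) - 1 = r * (s * M)" "0 < r"
  shows "inj_on (\<lambda>x. x ^ r) (fold_blk s \<omega> i)"
proof
  fix x y assume "x \<in> fold_blk s \<omega> i" "y \<in> fold_blk s \<omega> i" and eq: "x ^ r = y ^ r"
  then obtain t t' where t: "t < s" "x = \<omega> ^ (s * i + t)" "(s * i + t) mod (s * M) = s * (i mod M) + t"
    and t': "t' < s" "y = \<omega> ^ (s * i + t')" "(s * i + t') mod (s * M) = s * (i mod M) + t'"
    by (metis fold_blk_mod)
  then have "s * (i mod M) + t = s * (i mod M) + t'"
    using eq rth_power_eq_iff[OF assms] by simp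
  then show "x = y" using t t' by simp
qed

lemma rth_roots_in_recovery_blocks:
  assumes "CARD('a) - 1 = r * (s * M)" "0 < r" "p \<in> fold_blk s \<omega> i" "y \<noteq> 0" "y ^ r = p ^ r"
  shows "\<exists>j < r * M. j mod M = i mod M \<and> y \<in> fold_blk s \<omega> j"
proof -
  obtain t where t: "t < s" "p = \<omega> ^ (s * i + t)" "(s * i + t) mod (s * M) = s * (i mod M) + t"
    using fold_blk_mod[OF assms(3)] by blast
  obtain e where e: "e < CARD('a) - 1" "y = \<omega> ^ e"
    using image_powers assms(4) by (metis ComplI imageE lessThan_iff singletonD)
  define j where "j = e div s"
  have "0 < s" using t(1) by simp
  have e_mod: "e mod (s * M) = s * (j mod M) + e mod s"
    by (simp add: j_def mod_mult2_eq)
  have "e mod (s * M) = (s * i + t) mod (s * M)"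
    using rth_power_eq_iff[OF assms(1,2)] assms(5) e(2) t(2) by simp
  then have "s * (j mod M) + e mod s = s * (i mod M) + t"
    using e_mod t(3) by simp
  then have "j mod M = i mod M" "e mod s = t"
    using mult_add_less_eq_iff[OF mod_less_divisor[OF \<open>0 < s\<close>] t(1)] by simp_all
  moreover have "j < r * M"
    using e(1) assms(1) \<open>0 < s\<close> by (simp add: j_def div_less_iff_less_mult ac_simps)
  moreover have "y \<in> fold_blk s \<omega> j"
  proof -
    have "s * j + t = e"
      unfolding j_def \<open>e mod s = t\<close>[symmetric] by (rule mult_div_mod_eq)
    then show ?thesis
      using e(2) t(1) unfolding fold_blk_def by (intro CollectI exI[of _ t]) simp
  qed
  ultimately show ?thesis by blast
qed

lemma linear_recovery_fold_blk:
  assumes "CARD('a) - 1 = r * (s * M)" "3 \<le> r" "i < r * M"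
  shows "linear_recovery (- {0}) (fold_blk s \<omega> i) (\<Union>(fold_blk s \<omega> ` {j. j < r * M \<and> j mod M = i mod M}))
    {x + y |x y. x \<in> TB_code r l \<and> y \<in> dual_code (TB_code r l)} (dual_code (TB_code r l))
    (parity_solve r (fold_blk s \<omega> i))
    (parity_lift r (fold_blk s \<omega> i) (\<Union>(fold_blk s \<omega> ` {j. j < r * M \<and> j mod M = i mod M}) - fold_blk s \<omega> i))"
proof (rule linear_recovery_parity)
  have "0 < r" using assms(2) by simp
  have "r dvd CARD('a) - 1" using assms(1) by simp
  show "fold_blk s \<omega> i \<subseteq> \<Union>(fold_blk s \<omega> ` {j. j < r * M \<and> j mod M = i mod M})"
    using assms(3) by (intro UN_upper) simp
  show "\<Union>(fold_blk s \<omega> ` {j. j < r * M \<and> j mod M = i mod M}) \<subseteq> - {0}"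
    using fold_blk_subset_nonzero by blast
  show "y \<in> \<Union>(fold_blk s \<omega> ` {j. j < r * M \<and> j mod M = i mod M})"
    if "p \<in> fold_blk s \<omega> i" "y \<noteq> 0" "y ^ r = p ^ r" for p y :: 'a
    using rth_roots_in_recovery_blocks[OF assms(1) \<open>0 < r\<close> that] by blast
  show "inj_on (\<lambda>x. x ^ r) (fold_blk s \<omega> i)"
    by (rule inj_on_rth_power_fold_blk[OF assms(1) \<open>0 < r\<close>])
  show "0 \<in> TB_code r l" by (rule zero_in_TB_code)
  show "(\<Sum>x\<in>- {0}. w x * root_word r c x) = 0" if "w \<in> TB_code r l" for w :: "'a \<Rightarrow> 'a" and c :: 'a
    by (rule TB_code_orthogonal_root_word[OF \<open>r dvd CARD('a) - 1\<close> assms(2) that])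
  show "(\<Sum>x\<in>- {0}. root_word r (p ^ r) x * z x) = 0" if "z \<in> dual_code (TB_code r l)" "p \<noteq> 0" for z :: "'a \<Rightarrow> 'a" and p :: 'a
    using dual_TB_code_orthogonal_root_word[OF \<open>r dvd CARD('a) - 1\<close> _ that] assms(2) by simp
qed

lemma local_recovery_fold_blk:
  assumes "CARD('a) - 1 = r * (s * M)" "3 \<le> r" "i < r * M"
  shows "\<exists>I R L. i \<in> I \<and> I \<subseteq> {..<r * M} \<and> finite I \<and> card I \<le> r
    \<and> (\<forall>j\<in>I - {i}. fold_blk s \<omega> j \<inter> fold_blk s \<omega> i = {})
    \<and> linear_recovery (- {0}) (fold_blk s \<omega> i) (\<Union>(fold_blk s \<omega> ` I))
        {x + y |x y. x \<in> TB_code r l \<and> y \<in> dual_code (TB_code r l)} (dual_code (TB_code r l)) R L"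
proof -
  define I where "I = {j. j < r * M \<and> j mod M = i mod M}"
  have "i \<in> I" "I \<subseteq> {..<r * M}" "finite I" "card I \<le> r"
    using assms(3) card_residue_class_le by (auto simp: I_def)
  moreover have "\<forall>j\<in>I - {i}. fold_blk s \<omega> j \<inter> fold_blk s \<omega> i = {}"
    using fold_blk_disjoint[of s "r * M"] assms(1,3) by (auto simp: I_def ac_simps)
  moreover note linear_recovery_fold_blk[OF assms, of l, folded I_def]
  ultimately show ?thesis by blast
qed

end

theorem corollary5p10:
  fixes r l s :: nat and \<omega> :: "'a::{finite,field}"
  assumes "r dvd CARD('a) - 1"
    and "r \<ge> 3"
    and "CARD('a) \<le> 2 * l"
    and "l \<le> CARD('a) - 1"
    and "s dvd (CARD('a) - 1) div r"
    and "\<forall>x::'a. x \<noteq> 0 \<longrightarrow> (\<exists>k::nat. x = \<omega> ^ k)"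
  shows "qLRC (- {0::'a}) {..<(CARD('a) - 1) div s} (fold_blk s \<omega>) (qTB_space r l :: (('a \<Rightarrow> 'a) \<Rightarrow> complex) set) r"
proof -
  obtain M where M: "CARD('a) - 1 = r * (s * M)"
    using assms(1,5) by (metis dvd_div_mult_self dvdE mult.commute)
  have "r \<le> CARD('a) - 1"
    using assms(1) CARD_field_ge_2[where 'a = 'a] by (intro dvd_imp_le) auto
  then interpret cyclic_field \<omega>
    using generator_nonzero[OF assms(6)] assms(2,6) by unfold_locales auto
  have "(CARD('a) - 1) div s = r * M"
    using M \<open>r \<le> CARD('a) - 1\<close> by (auto simp: ac_simps)
  then show ?thesis
    unfolding qTB_space_def
    using local_recovery_fold_blk[OF M assms(2)] by (intro qLRC_CSS_linear_recovery dual_code_diff) auto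
qed

end
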